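(* Identify the letters $a_i$ with the positive integers $i$. Let $\mathbf{NCQSym}$ be the Hopf algebra with basis $(\mathbf{M}_u)$ indexed by packed words $u$ (including the empty word), where $\mathbf{M}_u=\sum_{\mathrm{tass}(w)=u} w\in\mathbb{K}\langle A\rangle$, with product the product of $\mathbb{K}\langle A\rangle$ and coproduct $\Delta\mathbf{M}_u=\sum_{k=0}^{m}\mathbf{M}_{u_{\le k}}\otimes\mathbf{M}_{\mathrm{tass}(u_{>k})}$, where $m$ is the greatest letter of $u$, $u_{\le k}$ (resp. $u_{>k}$) is the subword of $u$ formed by its letters $\le k$ (resp. $>k$). Let $\mathbf{PQSym}^*$ be the graded dual Hopf algebra of $\mathbf{PQSym}$, with $(\mathbf{G}_{\mathbf a})$ the basis dual to $(\mathbf{F}_{\mathbf a})$. Then the linear map $\mathbf{NCQSym}\to\mathbf{PQSym}^*$, $\mathbf{M}_u\mapsto\sum_{\mathrm{tass}(\mathbf a)=u}\mathbf{G}_{\mathbf a}$ (sum over parking functions $\mathbf a$), is an injective morphism of Hopf algebras.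
   Context: $\mathbb{K}$ is a field of characteristic $0$, $A=\{a_1<a_2<\cdots\}$, and $\mathbb{K}\langle A\rangle=\varprojlim \mathbb{K}\langle a_1,\dots,a_n\rangle$. For a word $w$ whose distinct letters are $b_1<\dots<b_r$, $\mathrm{tass}(w)$ is the image of $w$ under the monoid morphism $b_j\mapsto j$; $w$ is packed if $\mathrm{tass}(w)=w$. A parking function of length $n$ is a word $\mathbf a$ of length $n$ over positive integers whose nondecreasing rearrangement $b_1\le\dots\le b_n$ satisfies $b_i\le i$ for all $i$. Parkization: for a word $w$ of length $n$ over positive integers let $d(w)=\min\{i : |\{j: w_j\le i\}|<i\}$; if $d(w)=n+1$ then $\mathrm{park}(w)=w$; otherwise let $w'$ be obtained from $w$ by decreasing by $1$ every letter $>d(w)$, and set $\mathrm{park}(w)=\mathrm{park}(w')$. $\mathbf{PQSym}$ is the Hopf algebra with basis $(\mathbf F_{\mathbf a})$ indexed by parking functions, product $\mathbf F_{\mathbf a'}\mathbf F_{\mathbf a''}=\sum_{\mathbf a\in \mathbf a'\,\sqcup\!\sqcup\,(\mathbf a''[n'])}\mathbf F_{\mathbf a}$, where $n'$ is the length of $\mathbf a'$, $\mathbf a''[n']$ is $\mathbf a''$ with $n'$ added to each letter and $\sqcup\!\sqcup$ is the shuffle product, and coproduct $\Delta\mathbf F_{\mathbf a}=\sum_{\mathbf a=uv}\mathbf F_{\mathrm{park}(u)}\otimes\mathbf F_{\mathrm{park}(v)}$ (sum over factorizations of $\mathbf a$ as a concatenation of two possibly empty words). *)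

theory Defs
  imports Main
begin

text \<open>Letters a_i are identified with positive integers i; words are nat lists.\<close>

definition pos_word :: "nat list \<Rightarrow> bool" where
  "pos_word w \<longleftrightarrow> (\<forall>x\<in>set w. 0 < x)"

definition tass :: "nat list \<Rightarrow> nat list" where
  "tass w = map (\<lambda>x. card {y \<in> set w. y \<le> x}) w"

definition packed :: "nat list \<Rightarrow> bool" where
  "packed w \<longleftrightarrow> tass w = w"

text \<open>Parking function: positive letters, nondecreasing rearrangement b with b_i \<le> i (1-indexed).\<close>
definition parking :: "nat list \<Rightarrow> bool" where
  "parking a \<longleftrightarrow> pos_word a \<and> (\<forall>i<length a. sort a ! i \<le> Suc i)"

definition dpark :: "nat list \<Rightarrow> nat" where
  "dpark w = (LEAST i. card {j. j < length w \<and> w ! j \<le> i} < i)"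

lemma dpark_le: "dpark w \<le> length w + 1"
proof -
  have "card {j. j < length w \<and> w ! j \<le> length w + 1} \<le> card {..<length w}"
    by (rule card_mono) auto
  then have "card {j. j < length w \<and> w ! j \<le> length w + 1} < length w + 1" by simp
  then show ?thesis unfolding dpark_def by (rule Least_le)
qed

lemma dpark_big:
  assumes "dpark w \<noteq> length w + 1"
  shows "\<exists>j<length w. dpark w < w ! j"
proof (rule ccontr)
  assume "\<not> ?thesis"
  then have "{j. j < length w \<and> w ! j \<le> dpark w} = {..<length w}" by auto
  moreover have "card {j. j < length w \<and> w ! j \<le> dpark w} < dpark w"
  proof -
    have "card {j. j < length w \<and> w ! j \<le> length w + 1} \<le> card {..<length w}"
      by (rule card_mono) auto
    then have "card {j. j < length w \<and> w ! j \<le> length w + 1} < length w + 1" by simp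
    then have "\<exists>i. card {j. j < length w \<and> w ! j \<le> i} < i" by blast
    then show ?thesis unfolding dpark_def by (rule LeastI_ex)
  qed
  ultimately have "length w < dpark w" by simp
  with dpark_le[of w] assms show False by simp
qed

lemma park_decr:
  assumes "dpark w \<noteq> length w + 1"
  shows "sum_list (map (\<lambda>x. if dpark w < x then x - 1 else x) w) < sum_list w"
proof -
  obtain j where j: "j < length w" "dpark w < w ! j" using dpark_big[OF assms] by blast
  let ?f = "\<lambda>x. if dpark w < x then x - 1 else x"
  have "sum_list (map ?f w) = (\<Sum>i<length w. ?f (w ! i))"
    by (simp add: sum_list_sum_nth atLeast0LessThan)
  also have "\<dots> < (\<Sum>i<length w. w ! i)"
    by (rule sum_strict_mono_ex1) (use j in auto)
  also have "\<dots> = sum_list w" by (simp add: sum_list_sum_nth atLeast0LessThan)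
  finally show ?thesis .
qed

function park :: "nat list \<Rightarrow> nat list" where
  "park w = (if dpark w = length w + 1 then w
             else park (map (\<lambda>x. if dpark w < x then x - 1 else x) w))"
  by auto
termination
  by (relation "measure sum_list") (use park_decr in auto)

declare park.simps[simp del]

text \<open>Elements of PQSym^* (and of its tensor square) are given by their coefficient
  functions in the basis (G_a) (resp. (G_b \<otimes> G_c)), finitely supported on parking functions.\<close>

definition shift :: "nat \<Rightarrow> nat list \<Rightarrow> nat list" where
  "shift n c = map (\<lambda>x. x + n) c"

text \<open>Structure constant of the coproduct of PQSym: coefficient of F_b \<otimes> F_c in \<Delta> F_a.\<close>
definition pq_coprod_coeff :: "nat list \<Rightarrow> nat list \<Rightarrow> nat list \<Rightarrow> nat" where
  "pq_coprod_coeff a b c =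
     card {i. i \<le> length a \<and> park (take i a) = b \<and> park (drop i a) = c}"

text \<open>Structure constant of the product of PQSym: coefficient of F_a in F_b F_c
  (shuffles of b and c[n'] are pairwise distinct, their letters being disjoint).\<close>
definition pq_prod_coeff :: "nat list \<Rightarrow> nat list \<Rightarrow> nat list \<Rightarrow> nat" where
  "pq_prod_coeff b c a = (if a \<in> shuffles b (shift (length b) c) then 1 else 0)"

definition pqd_elem :: "(nat list \<Rightarrow> 'k::field) \<Rightarrow> bool" where
  "pqd_elem x \<longleftrightarrow> finite {a. x a \<noteq> 0} \<and> (\<forall>a. x a \<noteq> 0 \<longrightarrow> parking a)"

definition pqd_mult :: "(nat list \<Rightarrow> 'k::field) \<Rightarrow> (nat list \<Rightarrow> 'k) \<Rightarrow> nat list \<Rightarrow> 'k" where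
  "pqd_mult x y = (\<lambda>a. if parking a then
      (\<Sum>b\<in>{b. x b \<noteq> 0}. \<Sum>c\<in>{c. y c \<noteq> 0}. x b * y c * of_nat (pq_coprod_coeff a b c))
     else 0)"

definition pqd_coprod :: "(nat list \<Rightarrow> 'k::field) \<Rightarrow> nat list \<times> nat list \<Rightarrow> 'k" where
  "pqd_coprod x = (\<lambda>(b, c). if parking b \<and> parking c then
      (\<Sum>a\<in>{a. x a \<noteq> 0}. x a * of_nat (pq_prod_coeff b c a)) else 0)"

definition pqd_unit :: "nat list \<Rightarrow> 'k::field" where
  "pqd_unit = (\<lambda>a. if a = [] then 1 else 0)"

definition pqd_counit :: "(nat list \<Rightarrow> 'k::field) \<Rightarrow> 'k" where
  "pqd_counit x = x []"

text \<open>Series in K<A>: functions from words to K (only words with positive letters matter).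
  Product: the (Cauchy) product of noncommutative series.\<close>
definition ser_mult :: "(nat list \<Rightarrow> 'k::field) \<Rightarrow> (nat list \<Rightarrow> 'k) \<Rightarrow> nat list \<Rightarrow> 'k" where
  "ser_mult f g = (\<lambda>w. \<Sum>i\<le>length w. f (take i w) * g (drop i w))"

definition Mser :: "nat list \<Rightarrow> nat list \<Rightarrow> 'k::field" where
  "Mser u = (\<lambda>w. if pos_word w \<and> tass w = u then 1 else 0)"

text \<open>Elements of NCQSym are given by coefficient functions in the basis (M_u),
  finitely supported on packed words.\<close>
definition ncq_elem :: "(nat list \<Rightarrow> 'k::field) \<Rightarrow> bool" where
  "ncq_elem c \<longleftrightarrow> finite {u. c u \<noteq> 0} \<and> (\<forall>u. c u \<noteq> 0 \<longrightarrow> packed u)"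

definition ncq_ser :: "(nat list \<Rightarrow> 'k::field) \<Rightarrow> nat list \<Rightarrow> 'k" where
  "ncq_ser c = (\<lambda>w. \<Sum>u\<in>{u. c u \<noteq> 0}. c u * Mser u w)"

definition maxletter :: "nat list \<Rightarrow> nat" where
  "maxletter u = Max (insert 0 (set u))"

definition ncq_coprod :: "(nat list \<Rightarrow> 'k::field) \<Rightarrow> nat list \<times> nat list \<Rightarrow> 'k" where
  "ncq_coprod c = (\<lambda>(v, w). \<Sum>u\<in>{u. c u \<noteq> 0}. c u * of_nat (card
      {k. k \<le> maxletter u \<and> filter (\<lambda>x. x \<le> k) u = v \<and> tass (filter (\<lambda>x. k < x) u) = w}))"

definition ncq_unit :: "nat list \<Rightarrow> 'k::field" where
  "ncq_unit = (\<lambda>u. if u = [] then 1 else 0)"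

definition ncq_counit :: "(nat list \<Rightarrow> 'k::field) \<Rightarrow> 'k" where
  "ncq_counit c = c []"

text \<open>Linear extension of M_u \<mapsto> \<Sum>_{tass(a)=u} G_a (a parking function): the coefficient
  of G_a in the image of \<Sum>_u c_u M_u is c_{tass a}.\<close>
definition phi :: "(nat list \<Rightarrow> 'k::field) \<Rightarrow> nat list \<Rightarrow> 'k" where
  "phi c = (\<lambda>a. if parking a then c (tass a) else 0)"

text \<open>phi \<otimes> phi on coefficient functions of tensors in the bases M_v \<otimes> M_w and G_b \<otimes> G_c.\<close>
definition phi2 :: "(nat list \<times> nat list \<Rightarrow> 'k::field) \<Rightarrow> nat list \<times> nat list \<Rightarrow> 'k" where
  "phi2 T = (\<lambda>(b, c). if parking b \<and> parking c then T (tass b, tass c) else 0)"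

end

theory Submission
  imports Defs
begin

text \<open>The coefficient of \<open>G\<^sub>a\<close> in the image of \<open>M\<^sub>u\<close> is \<open>[tass a = u]\<close>, so the
  structure maps of PQSym only have to be transported through \<open>tass\<close>, which is invariant under
  strictly increasing relabellings of the letters. Parkization is such a relabelling, hence the
  deconcatenation coproduct of PQSym, read through \<open>tass\<close>, becomes the splitting of words that
  governs the product of \<open>K\<langle>A\<rangle>\<close>. Dually, the shuffles of \<open>b\<close> and \<open>c[|b|]\<close> have pairwise
  distinct standardizations, and a packed word \<open>u\<close> is the standardization of one of them exactly
  when its letters up to \<open>k = |set b|\<close> form \<open>tass b\<close> and its other letters standardize to
  \<open>tass c\<close>: this is the single term of \<open>\<Delta> M\<^sub>u\<close> contributing to \<open>M\<^bsub>tass b\<^esub> \<otimes> M\<^bsub>tass c\<^esub>\<close>.\<close>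

section \<open>Standardization of words\<close>

lemma strict_mono_on_inv_into:
  fixes f :: "'a::linorder \<Rightarrow> 'b::linorder"
  assumes "strict_mono_on A f"
  shows "strict_mono_on (f ` A) (inv_into A f)"
proof (rule strict_mono_onI)
  fix r s assume r: "r \<in> f ` A" and s: "s \<in> f ` A" and "r < s"
  then have "\<not> f (inv_into A f s) \<le> f (inv_into A f r)"
    by (simp add: f_inv_into_f)
  then show "inv_into A f r < inv_into A f s"
    using strict_mono_on_less_eq[OF assms] inv_into_into[OF r] inv_into_into[OF s] by force
qed

definition letter_rank :: "nat list \<Rightarrow> nat \<Rightarrow> nat" where
  "letter_rank w x = card {y \<in> set w. y \<le> x}"

lemma tass_eq_map_letter_rank: "tass w = map (letter_rank w) w"
  by (simp add: tass_def letter_rank_def)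

lemma letter_rank_mono: "x \<le> y \<Longrightarrow> letter_rank w x \<le> letter_rank w y"
  unfolding letter_rank_def by (rule card_mono) auto

lemma letter_rank_less: "x < y \<Longrightarrow> y \<in> set w \<Longrightarrow> letter_rank w x < letter_rank w y"
  unfolding letter_rank_def by (rule psubset_card_mono) (auto simp: set_eq_iff, metis le_refl not_le)

lemma letter_rank_le_iff: "x \<in> set w \<Longrightarrow> letter_rank w x \<le> letter_rank w t \<longleftrightarrow> x \<le> t"
  using letter_rank_mono letter_rank_less by (meson not_le)

lemma strict_mono_on_letter_rank: "strict_mono_on (set w) (letter_rank w)"
  by (rule strict_mono_onI) (rule letter_rank_less)

lemma letter_rank_image: "letter_rank w ` set w = {1..card (set w)}"
proof (rule card_subset_eq)
  show "letter_rank w ` set w \<subseteq> {1..card (set w)}"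
    unfolding letter_rank_def
    by (auto intro!: card_mono simp: Suc_le_eq card_gt_0_iff)
  show "card (letter_rank w ` set w) = card {1..card (set w)}"
    using strict_mono_on_imp_inj_on[OF strict_mono_on_letter_rank] by (simp add: card_image)
qed simp

lemma set_tass: "set (tass w) = {1..card (set w)}"
  by (simp add: tass_eq_map_letter_rank letter_rank_image)

lemma tass_map_strict_mono:
  assumes "strict_mono_on (set w) f"
  shows "tass (map f w) = tass w"
proof -
  have inj: "inj_on f (set w)"
    using assms by (rule strict_mono_on_imp_inj_on)
  have "card {y \<in> f ` set w. y \<le> f x} = card {y \<in> set w. y \<le> x}" if "x \<in> set w" for x
  proof -
    have "{y \<in> f ` set w. y \<le> f x} = f ` {y \<in> set w. y \<le> x}"
      using strict_mono_on_less_eq[OF assms _ that] by auto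
    then show ?thesis
      by (simp add: card_image inj_on_subset[OF inj])
  qed
  then show ?thesis by (simp add: tass_def)
qed

lemma tass_eq_iff_strict_mono_map:
  "tass v = tass w \<longleftrightarrow> (\<exists>f. strict_mono_on (set v) f \<and> map f v = w)"
proof
  assume eq: "tass v = tass w"
  define g where "g = inv_into (set w) (letter_rank w)"
  have "letter_rank v ` set v = letter_rank w ` set w"
    using eq by (metis tass_eq_map_letter_rank set_map)
  then have "strict_mono_on (set v) (g \<circ> letter_rank v)"
    unfolding g_def
    by (intro monotone_on_o[OF strict_mono_on_inv_into] strict_mono_on_letter_rank) auto
  moreover have "map (g \<circ> letter_rank v) v = w"
  proof -
    have "map (g \<circ> letter_rank v) v = map g (tass w)"
      using eq by (metis map_map tass_eq_map_letter_rank)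
    also have "\<dots> = map g (map (letter_rank w) w)"
      by (simp add: tass_eq_map_letter_rank)
    also have "\<dots> = w"
      using strict_mono_on_imp_inj_on[OF strict_mono_on_letter_rank[of w]]
      by (simp add: g_def map_idI)
    finally show ?thesis .
  qed
  ultimately show "\<exists>f. strict_mono_on (set v) f \<and> map f v = w" by blast
next
  assume "\<exists>f. strict_mono_on (set v) f \<and> map f v = w"
  then show "tass v = tass w" using tass_map_strict_mono by metis
qed

lemma tass_idem: "tass (tass w) = tass w"
  by (simp add: tass_eq_map_letter_rank[of w] tass_map_strict_mono strict_mono_on_letter_rank)

lemma packed_tass: "packed (tass w)"
  by (simp add: packed_def tass_idem)

lemma length_tass [simp]: "length (tass w) = length w"
  by (simp add: tass_def)

lemma card_set_tass: "card (set (tass w)) = card (set w)"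
  by (simp add: set_tass)

lemma packed_iff_set: "packed u \<longleftrightarrow> set u = {1..card (set u)}"
proof
  assume "packed u"
  then show "set u = {1..card (set u)}" by (metis packed_def set_tass)
next
  assume set_u: "set u = {1..card (set u)}"
  have "letter_rank u x = x" if "x \<in> set u" for x
  proof -
    have "x \<le> card (set u)"
      using that set_u by (metis atLeastAtMost_iff)
    then have "{y \<in> set u. y \<le> x} = {1..x}"
      by (subst set_u) auto
    then show ?thesis by (simp add: letter_rank_def)
  qed
  then show "packed u"
    by (simp add: packed_def tass_eq_map_letter_rank map_idI)
qed

lemma tass_map_letter_rank_subword:
  "set v \<subseteq> set w \<Longrightarrow> tass (map (letter_rank w) v) = tass v"
  by (rule tass_map_strict_mono) (rule monotone_on_subset[OF strict_mono_on_letter_rank])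

lemma tass_take_tass: "tass (take i (tass w)) = tass (take i w)"
  by (simp add: tass_eq_map_letter_rank[of w] take_map tass_map_letter_rank_subword set_take_subset)

lemma tass_drop_tass: "tass (drop i (tass w)) = tass (drop i w)"
  by (simp add: tass_eq_map_letter_rank[of w] drop_map tass_map_letter_rank_subword set_drop_subset)

lemma tass_shift: "tass (shift n c) = tass c"
  unfolding shift_def by (rule tass_map_strict_mono) (simp add: strict_mono_onI)

lemma filter_le_letter_rank_tass:
  "filter (\<lambda>j. j \<le> letter_rank w t) (tass w) = map (letter_rank w) (filter (\<lambda>x. x \<le> t) w)"
  by (auto simp: tass_eq_map_letter_rank filter_map o_def letter_rank_le_iff cong: filter_cong)

lemma filter_gt_letter_rank_tass:
  "filter (\<lambda>j. letter_rank w t < j) (tass w) = map (letter_rank w) (filter (\<lambda>x. t < x) w)"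
  by (auto simp: tass_eq_map_letter_rank filter_map o_def letter_rank_le_iff not_le[symmetric]
      cong: filter_cong)

lemma maxletter_packed: "packed u \<Longrightarrow> maxletter u = card (set u)"
proof -
  assume "packed u"
  then obtain m where set_u: "set u = {1..m}" by (auto simp: packed_iff_set)
  then have "insert 0 (set u) = {0..m}" by auto
  then have "maxletter u = m"
    unfolding maxletter_def by (auto intro: Max_eqI)
  then show ?thesis using set_u by simp
qed

lemma card_set_filter_le_packed:
  assumes "packed u" and "k \<le> maxletter u"
  shows "card (set (filter (\<lambda>x. x \<le> k) u)) = k"
proof -
  obtain m where set_u: "set u = {1..m}" using assms(1) by (auto simp: packed_iff_set)
  with assms have "k \<le> m" by (simp add: maxletter_packed)
  with set_u have "set (filter (\<lambda>x. x \<le> k) u) = {1..k}" by auto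
  then show ?thesis by simp
qed

section \<open>Parking functions and parkization\<close>

lemma pos_word_take_drop: "pos_word w \<longleftrightarrow> pos_word (take i w) \<and> pos_word (drop i w)"
  unfolding pos_word_def by (metis Un_iff append_take_drop_id set_append)

lemma parking_iff_count:
  "parking w \<longleftrightarrow> pos_word w \<and> (\<forall>i\<le>length w. i \<le> length (filter (\<lambda>x. x \<le> i) w))"
proof -
  let ?N = "\<lambda>i. card {j. j < length w \<and> sort w ! j \<le> i}"
  have count_sort: "length (filter (\<lambda>x. x \<le> i) w) = ?N i" for i
    using length_filter_conv_card[of "\<lambda>x. x \<le> i" "sort w"] by (simp add: filter_sort)
  have "(\<forall>k<length w. sort w ! k \<le> Suc k) \<longleftrightarrow> (\<forall>i\<le>length w. i \<le> ?N i)"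
  proof (intro iffI allI impI)
    fix i assume bound: "\<forall>k<length w. sort w ! k \<le> Suc k" and i: "i \<le> length w"
    have "{..<i} \<subseteq> {j. j < length w \<and> sort w ! j \<le> i}"
    proof
      fix j assume "j \<in> {..<i}"
      then show "j \<in> {j. j < length w \<and> sort w ! j \<le> i}"
        using i bound[rule_format, of j] by simp
    qed
    from card_mono[OF _ this] show "i \<le> ?N i" by simp
  next
    fix k assume count: "\<forall>i\<le>length w. i \<le> ?N i" and k: "k < length w"
    show "sort w ! k \<le> Suc k"
    proof (rule ccontr)
      assume big: "\<not> sort w ! k \<le> Suc k"
      have "{j. j < length w \<and> sort w ! j \<le> Suc k} \<subseteq> {..<k}"
      proof (rule subsetI, rule ccontr)
        fix j assume "j \<in> {j. j < length w \<and> sort w ! j \<le> Suc k}" "j \<notin> {..<k}"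
        then show False
          using big sorted_nth_mono[OF sorted_sort, of k j w] by simp
      qed
      from card_mono[OF _ this] have "?N (Suc k) \<le> k" by simp
      moreover have "Suc k \<le> ?N (Suc k)" using count k by simp
      ultimately show False by simp
    qed
  qed
  then show ?thesis
    by (simp add: parking_def count_sort)
qed

lemma parking_imp_set_subset: "parking a \<Longrightarrow> set a \<subseteq> {1..length a}"
proof
  fix x assume a: "parking a" and x: "x \<in> set a"
  then obtain i where i: "i < length a" "sort a ! i = x"
    by (metis in_set_conv_nth length_sort set_sort)
  with a x have "0 < x" "x \<le> Suc i"
    by (auto simp: parking_def pos_word_def)
  with i show "x \<in> {1..length a}" by simp
qed

lemma finite_parking_length: "finite {a. parking a \<and> length a = n}"
  by (rule finite_subset[OF _ finite_lists_length_eq[of "{1..n}" n]])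
    (use parking_imp_set_subset in auto)

lemma packed_imp_parking: "packed u \<Longrightarrow> parking u"
proof -
  assume "packed u"
  then have set_u: "set u = {1..card (set u)}" by (simp add: packed_iff_set)
  then have bounds: "1 \<le> x \<and> x \<le> card (set u)" if "x \<in> set u" for x
    using that by (metis atLeastAtMost_iff)
  have "i \<le> length (filter (\<lambda>x. x \<le> i) u)" if "i \<le> length u" for i
  proof (cases "i \<le> card (set u)")
    case True
    then have "set (filter (\<lambda>x. x \<le> i) u) = {1..i}"
      by (subst set_filter, subst set_u) auto
    then show ?thesis
      using card_length[of "filter (\<lambda>x. x \<le> i) u"] by simp
  next
    case False
    then have "filter (\<lambda>x. x \<le> i) u = u"
      using bounds by (intro filter_True) fastforce
    then show ?thesis using that by simp
  qed
  moreover have "pos_word u"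
    using bounds unfolding pos_word_def by fastforce
  ultimately show "parking u" by (simp add: parking_iff_count)
qed

lemma dpark_eq_Least: "dpark w = (LEAST i. length (filter (\<lambda>x. x \<le> i) w) < i)"
  by (simp add: dpark_def length_filter_conv_card)

lemma dpark_deficient: "length (filter (\<lambda>x. x \<le> dpark w) w) < dpark w"
proof -
  have "length (filter (\<lambda>x. x \<le> length w + 1) w) < length w + 1"
    using length_filter_le[of "\<lambda>x. x \<le> length w + 1" w] by linarith
  then show ?thesis
    unfolding dpark_eq_Least by (rule LeastI)
qed

lemma below_dpark_not_deficient: "i < dpark w \<Longrightarrow> i \<le> length (filter (\<lambda>x. x \<le> i) w)"
  unfolding dpark_eq_Least using not_less_Least not_le by blast

text \<open>So each parkization step, which decrements the letters above \<open>dpark w\<close>, is strictly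
  increasing on the letters of \<open>w\<close>.\<close>

lemma dpark_notin_set: "dpark w \<notin> set w"
proof
  let ?N = "\<lambda>i. length (filter (\<lambda>x. x \<le> i) w)"
  assume D: "dpark w \<in> set w"
  have "0 < dpark w" using dpark_deficient[of w] by simp
  then have "dpark w - 1 \<le> ?N (dpark w - 1)"
    by (intro below_dpark_not_deficient) simp
  also have "?N (dpark w - 1) < ?N (dpark w)"
  proof -
    have "filter (\<lambda>x. x \<le> dpark w - 1) w = filter (\<lambda>x. x \<le> dpark w - 1) (filter (\<lambda>x. x \<le> dpark w) w)"
      by (simp, rule filter_cong) auto
    moreover have "length (filter (\<lambda>x. x \<le> dpark w - 1) (filter (\<lambda>x. x \<le> dpark w) w)) < ?N (dpark w)"
      using D \<open>0 < dpark w\<close> by (intro length_filter_less) auto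
    ultimately show ?thesis by simp
  qed
  finally show False using dpark_deficient[of w] by simp
qed

lemma parking_if_dpark_eq: "pos_word w \<Longrightarrow> dpark w = length w + 1 \<Longrightarrow> parking w"
  by (simp add: parking_iff_count below_dpark_not_deficient)

lemma strict_mono_on_decrement_above:
  assumes "(d::nat) \<notin> A"
  shows "strict_mono_on A (\<lambda>x. if d < x then x - 1 else x)"
proof (rule strict_mono_onI)
  fix r s assume "r \<in> A" "s \<in> A" "r < s"
  moreover from assms this have "r \<noteq> d" "s \<noteq> d" by auto
  ultimately show "(if d < r then r - 1 else r) < (if d < s then s - 1 else s)" by auto
qed

lemma tass_park: "tass (park w) = tass w"
proof (induction w rule: park.induct)
  case (1 w)
  show ?case
  proof (cases "dpark w = length w + 1")
    case False
    then show ?thesis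
      using "1.IH" tass_map_strict_mono[OF strict_mono_on_decrement_above[OF dpark_notin_set]]
      by (simp add: park.simps[of w])
  qed (simp add: park.simps[of w])
qed

lemma parking_park: "pos_word w \<Longrightarrow> parking (park w)"
proof (induction w rule: park.induct)
  case (1 w)
  show ?case
  proof (cases "dpark w = length w + 1")
    case True
    then show ?thesis
      using "1.prems" parking_if_dpark_eq by (simp add: park.simps[of w])
  next
    case False
    have "0 < dpark w" using dpark_deficient[of w] by simp
    then have "pos_word (map (\<lambda>x. if dpark w < x then x - 1 else x) w)"
      using "1.prems" by (auto simp: pos_word_def)
    then show ?thesis
      using "1.IH" False by (simp add: park.simps[of w])
  qed
qed

section \<open>Shuffles and splittings of packed words\<close>

lemma length_filter_shuffles:
  "a \<in> shuffles xs ys \<Longrightarrow> length (filter P a) = length (filter P xs) + length (filter P ys)"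
  using length_shuffles filter_shuffles by blast

lemma parking_shuffles_shift:
  assumes b: "parking b" and c: "parking c" and a: "a \<in> shuffles b (shift (length b) c)"
  shows "parking a"
  unfolding parking_iff_count
proof (intro conjI allI impI)
  let ?n = "length b"
  have "set a = set b \<union> (\<lambda>x. x + ?n) ` set c"
    using set_shuffles[OF a] by (simp add: shift_def)
  then show "pos_word a"
    using b c by (auto simp: parking_def pos_word_def)
  fix i assume i: "i \<le> length a"
  have count: "length (filter (\<lambda>x. x \<le> i) a)
      = length (filter (\<lambda>x. x \<le> i) b) + length (filter (\<lambda>x. x \<le> i - ?n) c)" if "?n \<le> i"
    using length_filter_shuffles[OF a] that by (simp add: shift_def filter_map o_def le_diff_conv2)
  show "i \<le> length (filter (\<lambda>x. x \<le> i) a)"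
  proof (cases "i \<le> ?n")
    case True
    then show ?thesis
      using b length_filter_shuffles[OF a] by (fastforce simp: parking_iff_count)
  next
    case False
    have "filter (\<lambda>x. x \<le> i) b = b"
      using parking_imp_set_subset[OF b] False by (intro filter_True) auto
    moreover have "i - ?n \<le> length c"
      using i length_shuffles[OF a] by (simp add: shift_def)
    ultimately show ?thesis
      using count False c by (fastforce simp: parking_iff_count)
  qed
qed

lemma inj_on_tass_shuffles: "inj_on tass (shuffles b c)"
proof (rule inj_onI)
  fix a a' assume a: "a \<in> shuffles b c" and a': "a' \<in> shuffles b c" and "tass a = tass a'"
  have "set a = set a'" using set_shuffles[OF a] set_shuffles[OF a'] by simp
  then have "letter_rank a = letter_rank a'" by (simp add: letter_rank_def[abs_def])
  with \<open>tass a = tass a'\<close> have "map (letter_rank a) a = map (letter_rank a) a'"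
    by (simp add: tass_eq_map_letter_rank)
  moreover have "inj_on (letter_rank a) (set a \<union> set a')"
    using strict_mono_on_imp_inj_on[OF strict_mono_on_letter_rank[of a]] \<open>set a = set a'\<close> by simp
  ultimately show "a = a'" by (simp add: inj_on_map_eq_map)
qed

context
  fixes b c :: "nat list" and n :: nat
  assumes low: "\<forall>x\<in>set b. x \<le> n" and high: "\<forall>y\<in>set c. n < y"
begin

lemma filter_shuffles_threshold:
  assumes "a \<in> shuffles b c"
  shows "filter (\<lambda>x. x \<le> n) a = b" and "filter (\<lambda>x. n < x) a = c"
proof -
  have disj: "set b \<inter> set c = {}" using low high by fastforce
  have "x \<in> set b \<longleftrightarrow> x \<le> n" if "x \<in> set a" for x
    using that set_shuffles[OF assms] low high by fastforce
  then show "filter (\<lambda>x. x \<le> n) a = b" "filter (\<lambda>x. n < x) a = c"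
    using filter_shuffles_disjoint1[OF disj assms] by (auto simp: not_le[symmetric] cong: filter_cong)
qed

lemma letter_rank_shuffles_low:
  assumes "a \<in> shuffles b c" and "x \<le> n"
  shows "letter_rank a x = letter_rank b x"
proof -
  have "{y \<in> set a. y \<le> x} = {y \<in> set b. y \<le> x}"
    using set_shuffles[OF assms(1)] high assms(2) by fastforce
  then show ?thesis by (simp add: letter_rank_def)
qed

lemma letter_rank_shuffles_threshold:
  assumes "a \<in> shuffles b c"
  shows "letter_rank a n = card (set b)"
proof -
  have "{y \<in> set b. y \<le> n} = set b" using low by auto
  then show ?thesis
    using letter_rank_shuffles_low[OF assms order.refl] by (simp add: letter_rank_def)
qed

lemma tass_shuffles_split:
  assumes a: "a \<in> shuffles b c"
  shows "filter (\<lambda>j. j \<le> card (set b)) (tass a) = tass b"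
    and "tass (filter (\<lambda>j. card (set b) < j) (tass a)) = tass c"
proof -
  have "filter (\<lambda>j. j \<le> card (set b)) (tass a) = map (letter_rank a) b"
    using filter_le_letter_rank_tass[of a n]
    by (simp add: letter_rank_shuffles_threshold[OF a] filter_shuffles_threshold[OF a])
  also have "\<dots> = map (letter_rank b) b"
    using letter_rank_shuffles_low[OF a] low by simp
  finally show "filter (\<lambda>j. j \<le> card (set b)) (tass a) = tass b"
    by (simp add: tass_eq_map_letter_rank)
  have "filter (\<lambda>j. card (set b) < j) (tass a) = map (letter_rank a) c"
    using filter_gt_letter_rank_tass[of a n]
    by (simp add: letter_rank_shuffles_threshold[OF a] filter_shuffles_threshold[OF a])
  then show "tass (filter (\<lambda>j. card (set b) < j) (tass a)) = tass c"
    using set_shuffles[OF a] by (simp add: tass_map_letter_rank_subword)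
qed

lemma in_tass_shuffles_if_split:
  assumes u: "packed u"
    and split_low: "tass (filter (\<lambda>x. x \<le> k) u) = tass b"
    and split_high: "tass (filter (\<lambda>x. k < x) u) = tass c"
  shows "u \<in> tass ` shuffles b c"
proof -
  obtain f where f: "strict_mono_on (set (filter (\<lambda>x. x \<le> k) u)) f"
    and f_map: "map f (filter (\<lambda>x. x \<le> k) u) = b"
    using split_low tass_eq_iff_strict_mono_map by blast
  obtain g where g: "strict_mono_on (set (filter (\<lambda>x. k < x) u)) g"
    and g_map: "map g (filter (\<lambda>x. k < x) u) = c"
    using split_high tass_eq_iff_strict_mono_map by blast
  define h where "h x = (if x \<le> k then f x else g x)" for x
  have h_low: "h x \<le> n \<longleftrightarrow> x \<le> k" if "x \<in> set u" for x
    using that low high f_map g_map by (force simp: h_def)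
  have "filter (\<lambda>y. y \<le> n) (map h u) = map h (filter (\<lambda>x. x \<le> k) u)"
    using h_low by (simp add: filter_map o_def cong: filter_cong)
  also have "\<dots> = map f (filter (\<lambda>x. x \<le> k) u)"
    by (rule map_cong) (auto simp: h_def)
  also note f_map
  finally have "filter (\<lambda>y. y \<le> n) (map h u) = b" .
  moreover have "filter (\<lambda>y. \<not> y \<le> n) (map h u) = map h (filter (\<lambda>x. k < x) u)"
    using h_low by (simp add: filter_map o_def not_le[symmetric] cong: filter_cong)
  moreover have "map h (filter (\<lambda>x. k < x) u) = map g (filter (\<lambda>x. k < x) u)"
    by (rule map_cong) (auto simp: h_def)
  ultimately have "map h u \<in> shuffles b c"
    using partition_in_shuffles[of "map h u" "\<lambda>y. y \<le> n"] g_map by simp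
  moreover have "strict_mono_on (set u) h"
  proof (rule strict_mono_onI)
    fix r s assume "r \<in> set u" "s \<in> set u" "r < s"
    then show "h r < h s"
      using strict_mono_onD[OF f, of r s] strict_mono_onD[OF g, of r s] h_low[of r] h_low[of s]
      by (auto simp: h_def)
  qed
  then have "tass (map h u) = u"
    using u by (simp add: tass_map_strict_mono packed_def)
  ultimately show ?thesis by force
qed

lemma card_packed_splits:
  assumes u: "packed u"
  shows "card {k. k \<le> maxletter u \<and> filter (\<lambda>x. x \<le> k) u = tass b
                  \<and> tass (filter (\<lambda>x. k < x) u) = tass c}
       = (if u \<in> tass ` shuffles b c then 1 else 0)"
    (is "card ?K = _")
proof -
  have K_sub: "?K \<subseteq> {card (set b)}"
  proof
    fix k assume "k \<in> ?K"
    then have "k = card (set (tass b))"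
      using card_set_filter_le_packed[OF u, of k] by simp
    then show "k \<in> {card (set b)}" by (simp add: card_set_tass)
  qed
  show ?thesis
  proof (cases "u \<in> tass ` shuffles b c")
    case True
    then obtain a where a: "a \<in> shuffles b c" and u_eq: "u = tass a" by blast
    have "card (set b) \<le> card (set a)"
      using set_shuffles[OF a] by (simp add: card_mono)
    then have "card (set b) \<in> ?K"
      using tass_shuffles_split[OF a] u_eq
      by (simp add: maxletter_packed[OF packed_tass] card_set_tass)
    with K_sub have "?K = {card (set b)}" by blast
    with True show ?thesis by simp
  next
    case False
    have "?K = {}"
    proof (rule equals0I)
      fix k assume "k \<in> ?K"
      then have "tass (filter (\<lambda>x. x \<le> k) u) = tass b" "tass (filter (\<lambda>x. k < x) u) = tass c"
        by (simp_all add: tass_idem)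
      with in_tass_shuffles_if_split[OF u] False show False by blast
    qed
    with False show ?thesis by simp
  qed
qed

end

lemma sum_support_restrict:
  fixes x :: "'a \<Rightarrow> 'k::comm_monoid_add"
  assumes "finite {a. x a \<noteq> 0}" and "finite S"
  shows "(\<Sum>a\<in>{a. x a \<noteq> 0}. if a \<in> S then x a else 0) = (\<Sum>a\<in>S. x a)"
proof -
  have "(\<Sum>a\<in>{a. x a \<noteq> 0}. if a \<in> S then x a else 0) = (\<Sum>a\<in>{a. x a \<noteq> 0} \<inter> S. x a)"
    using assms(1) by (rule sum.inter_restrict[symmetric])
  also have "\<dots> = (\<Sum>a\<in>S. x a)"
    using assms(2) by (intro sum.mono_neutral_left) auto
  finally show ?thesis .
qed

lemma sum_support_pairs_card:
  fixes x y :: "'a \<Rightarrow> 'k::comm_semiring_1"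
  assumes I: "finite I" and x: "finite {b. x b \<noteq> 0}" and y: "finite {c. y c \<noteq> 0}"
  shows "(\<Sum>b\<in>{b. x b \<noteq> 0}. \<Sum>c\<in>{c. y c \<noteq> 0}. x b * y c * of_nat (card {i\<in>I. p i = b \<and> q i = c}))
       = (\<Sum>i\<in>I. x (p i) * y (q i))"
proof -
  have delta: "(\<Sum>b\<in>{b. f b \<noteq> 0}. if b \<in> {t} then f b else 0) = f t"
    if "finite {b. f b \<noteq> 0}" for f :: "'a \<Rightarrow> 'k" and t
    using sum_support_restrict[OF that, of "{t}"] by simp
  have card_eq_sum: "of_nat (card {i\<in>I. P i}) = (\<Sum>i\<in>I. of_bool (P i) :: 'k)" for P
    using I by (simp add: Int_def)
  have "(\<Sum>b\<in>{b. x b \<noteq> 0}. \<Sum>c\<in>{c. y c \<noteq> 0}. x b * y c * of_nat (card {i\<in>I. p i = b \<and> q i = c}))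
      = (\<Sum>b\<in>{b. x b \<noteq> 0}. \<Sum>c\<in>{c. y c \<noteq> 0}. \<Sum>i\<in>I. x b * y c * of_bool (p i = b \<and> q i = c))"
    by (simp only: card_eq_sum sum_distrib_left)
  also have "\<dots> = (\<Sum>b\<in>{b. x b \<noteq> 0}. \<Sum>i\<in>I. \<Sum>c\<in>{c. y c \<noteq> 0}. x b * y c * of_bool (p i = b \<and> q i = c))"
    by (rule sum.cong[OF refl], rule sum.swap)
  also have "\<dots> = (\<Sum>i\<in>I. \<Sum>b\<in>{b. x b \<noteq> 0}. \<Sum>c\<in>{c. y c \<noteq> 0}. x b * y c * of_bool (p i = b \<and> q i = c))"
    by (rule sum.swap)
  also have "\<dots> = (\<Sum>i\<in>I. (\<Sum>b\<in>{b. x b \<noteq> 0}. if b \<in> {p i} then x b else 0)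
                         * (\<Sum>c\<in>{c. y c \<noteq> 0}. if c \<in> {q i} then y c else 0))"
    unfolding sum_product by (intro sum.cong refl) auto
  also have "\<dots> = (\<Sum>i\<in>I. x (p i) * y (q i))"
    by (simp only: delta[OF x] delta[OF y])
  finally show ?thesis .
qed

section \<open>The morphism from NCQSym to the dual of PQSym\<close>

lemma phi_linear:
  "phi (\<lambda>u. r * c u + s * d u) = (\<lambda>a. r * phi c a + s * phi d a)"
  by (auto simp: phi_def)

lemma pqd_elem_phi:
  assumes "ncq_elem c"
  shows "pqd_elem (phi c)"
proof -
  have "{a. phi c a \<noteq> 0} \<subseteq> (\<Union>u\<in>{u. c u \<noteq> 0}. {a. parking a \<and> length a = length u})"
    by (force simp: phi_def split: if_splits)
  moreover have "finite (\<Union>u\<in>{u. c u \<noteq> 0}. {a. parking a \<and> length a = length u})"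
    using assms finite_parking_length by (auto simp: ncq_elem_def)
  ultimately show ?thesis
    unfolding pqd_elem_def by (auto simp: phi_def intro: finite_subset split: if_splits)
qed

lemma phi_packed: "packed u \<Longrightarrow> phi c u = c u"
  by (simp add: phi_def packed_imp_parking packed_def)

lemma inj_on_phi: "inj_on (phi :: (nat list \<Rightarrow> 'k::field) \<Rightarrow> _) {c. ncq_elem c}"
proof (rule inj_onI, rule ext)
  fix c d :: "nat list \<Rightarrow> 'k" and u
  assume c: "c \<in> {c. ncq_elem c}" and d: "d \<in> {c. ncq_elem c}" and "phi c = phi d"
  show "c u = d u"
  proof (cases "packed u")
    case True
    then show ?thesis
      using phi_packed[OF True, of c] phi_packed[OF True, of d] \<open>phi c = phi d\<close> by simp
  next
    case False
    with c d have "c u = 0" "d u = 0" unfolding ncq_elem_def by blast+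
    then show ?thesis by simp
  qed
qed

lemma phi_ncq_unit: "phi ncq_unit = pqd_unit"
  by (auto simp: phi_def ncq_unit_def pqd_unit_def parking_def pos_word_def tass_def)

lemma pqd_counit_phi: "pqd_counit (phi c) = ncq_counit c"
  by (simp add: pqd_counit_def ncq_counit_def phi_def parking_def pos_word_def tass_def)

text \<open>\<open>M\<^sub>u M\<^sub>v\<close> is the sum of the \<open>M\<^sub>w\<close> over the packed words \<open>w\<close> whose prefix of
  length \<open>|u|\<close> standardizes to \<open>u\<close> and whose remaining suffix standardizes to \<open>v\<close>.\<close>

definition ncq_mult :: "(nat list \<Rightarrow> 'k::field) \<Rightarrow> (nat list \<Rightarrow> 'k) \<Rightarrow> nat list \<Rightarrow> 'k" where
  "ncq_mult c d u =
     (if packed u then \<Sum>i\<le>length u. c (tass (take i u)) * d (tass (drop i u)) else 0)"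

lemma ncq_elem_ncq_mult:
  assumes c: "ncq_elem c" and d: "ncq_elem d"
  shows "ncq_elem (ncq_mult c d)"
proof -
  let ?S = "\<Union>x\<in>{x. c x \<noteq> 0}. \<Union>y\<in>{y. d y \<noteq> 0}. {u. parking u \<and> length u = length x + length y}"
  have "{u. ncq_mult c d u \<noteq> 0} \<subseteq> ?S"
  proof
    fix u assume "u \<in> {u. ncq_mult c d u \<noteq> 0}"
    then have u: "packed u" and "(\<Sum>i\<le>length u. c (tass (take i u)) * d (tass (drop i u))) \<noteq> 0"
      by (simp_all add: ncq_mult_def split: if_splits)
    then obtain i where "i \<le> length u" "c (tass (take i u)) \<noteq> 0" "d (tass (drop i u)) \<noteq> 0"
      by (auto elim: sum.not_neutral_contains_not_neutral)
    with packed_imp_parking[OF u] show "u \<in> ?S"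
      by (intro UN_I[of "tass (take i u)"] UN_I[of "tass (drop i u)"]) auto
  qed
  moreover have "finite ?S"
    using c d by (intro finite_UN_I) (simp_all add: ncq_elem_def finite_parking_length)
  ultimately have "finite {u. ncq_mult c d u \<noteq> 0}"
    by (rule finite_subset)
  then show ?thesis
    by (simp add: ncq_elem_def ncq_mult_def)
qed

lemma ncq_ser_eq:
  assumes "ncq_elem c"
  shows "ncq_ser c w = (if pos_word w then c (tass w) else 0)"
proof -
  have "ncq_ser c w = (\<Sum>u\<in>{u. c u \<noteq> 0}. if tass w = u then (if pos_word w then c u else 0) else 0)"
    unfolding ncq_ser_def Mser_def by (rule sum.cong) auto
  also have "\<dots> = (if pos_word w then c (tass w) else 0)"
    using assms by (simp add: ncq_elem_def sum.delta)
  finally show ?thesis .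
qed

lemma ncq_ser_ncq_mult:
  assumes c: "ncq_elem c" and d: "ncq_elem d"
  shows "ncq_ser (ncq_mult c d) = ser_mult (ncq_ser c) (ncq_ser d)"
proof
  fix w
  have "ncq_ser c (take i w) * ncq_ser d (drop i w)
      = (if pos_word w then c (tass (take i w)) * d (tass (drop i w)) else 0)" for i
    using pos_word_take_drop[of w i] by (simp add: ncq_ser_eq c d)
  then show "ncq_ser (ncq_mult c d) w = ser_mult (ncq_ser c) (ncq_ser d) w"
    by (simp add: ncq_ser_eq ncq_elem_ncq_mult c d ncq_mult_def packed_tass
        tass_take_tass tass_drop_tass ser_mult_def)
qed

lemma pqd_mult_eq_sum_park:
  assumes "finite {b. x b \<noteq> 0}" and "finite {c. y c \<noteq> 0}" and "parking a"
  shows "pqd_mult x y a = (\<Sum>i\<le>length a. x (park (take i a)) * y (park (drop i a)))"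
  using sum_support_pairs_card[OF finite_atMost[of "length a"] assms(1,2),
      where p = "\<lambda>i. park (take i a)" and q = "\<lambda>i. park (drop i a)"] assms(3)
  by (simp add: pqd_mult_def pq_coprod_coeff_def)

lemma phi_ncq_mult:
  assumes c: "ncq_elem c" and d: "ncq_elem d"
  shows "phi (ncq_mult c d) = pqd_mult (phi c) (phi d)"
proof
  fix a
  show "phi (ncq_mult c d) a = pqd_mult (phi c) (phi d) a"
  proof (cases "parking a")
    case True
    then have "pos_word (take i a)" "pos_word (drop i a)" for i
      using pos_word_take_drop parking_def by blast+
    then have "phi (ncq_mult c d) a = (\<Sum>i\<le>length a. phi c (park (take i a)) * phi d (park (drop i a)))"
      using True by (simp add: phi_def ncq_mult_def packed_tass tass_take_tass tass_drop_tass
          parking_park tass_park)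
    also have "\<dots> = pqd_mult (phi c) (phi d) a"
      using pqd_elem_phi[OF c] pqd_elem_phi[OF d] True
      by (simp add: pqd_elem_def pqd_mult_eq_sum_park)
    finally show ?thesis .
  qed (simp add: phi_def pqd_mult_def)
qed

lemma pqd_coprod_eq_sum_shuffles:
  assumes "finite {a. x a \<noteq> 0}" and "parking b" and "parking c"
  shows "pqd_coprod x (b, c) = (\<Sum>a\<in>shuffles b (shift (length b) c). x a)"
  using sum_support_restrict[OF assms(1) finite_shuffles] assms(2,3)
  by (simp add: pqd_coprod_def pq_prod_coeff_def if_distrib cong: if_cong)

lemma phi2_ncq_coprod:
  assumes c: "ncq_elem c"
  shows "phi2 (ncq_coprod c) = pqd_coprod (phi c)"
proof (rule ext, clarify)
  fix b cc
  show "phi2 (ncq_coprod c) (b, cc) = pqd_coprod (phi c) (b, cc)"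
  proof (cases "parking b \<and> parking cc")
    case True
    then have b: "parking b" and cc: "parking cc" by auto
    define Sh where "Sh = shuffles b (shift (length b) cc)"
    have low: "\<forall>x\<in>set b. x \<le> length b"
      using parking_imp_set_subset[OF b] by auto
    have high: "\<forall>y\<in>set (shift (length b) cc). length b < y"
      using cc by (auto simp: shift_def parking_def pos_word_def)
    have fin: "finite {u. c u \<noteq> 0}" and packed: "c u \<noteq> 0 \<Longrightarrow> packed u" for u
      using c by (auto simp: ncq_elem_def)
    have "phi2 (ncq_coprod c) (b, cc) = (\<Sum>u\<in>{u. c u \<noteq> 0}. if u \<in> tass ` Sh then c u else 0)"
      using True card_packed_splits[OF low high packed]
      by (auto simp: phi2_def ncq_coprod_def tass_shift Sh_def intro!: sum.cong)
    also have "\<dots> = (\<Sum>u\<in>tass ` Sh. c u)"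
      using fin by (simp add: sum_support_restrict Sh_def)
    also have "\<dots> = (\<Sum>a\<in>Sh. c (tass a))"
      using inj_on_tass_shuffles by (simp add: sum.reindex Sh_def)
    also have "\<dots> = (\<Sum>a\<in>Sh. phi c a)"
      using parking_shuffles_shift[OF b cc] by (simp add: phi_def Sh_def)
    also have "\<dots> = pqd_coprod (phi c) (b, cc)"
      using pqd_elem_phi[OF c] b cc by (simp add: pqd_elem_def pqd_coprod_eq_sum_shuffles Sh_def)
    finally show ?thesis .
  qed (auto simp: phi2_def pqd_coprod_def)
qed

theorem proposition3p3:
  shows "(\<forall>(c :: nat list \<Rightarrow> 'k::field_char_0) d r s. ncq_elem c \<and> ncq_elem d \<longrightarrow>
            phi (\<lambda>u. r * c u + s * d u) = (\<lambda>a. r * phi c a + s * phi d a))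
       \<and> (\<forall>c :: nat list \<Rightarrow> 'k. ncq_elem c \<longrightarrow> pqd_elem (phi c))
       \<and> inj_on (phi :: (nat list \<Rightarrow> 'k) \<Rightarrow> _) {c. ncq_elem c}
       \<and> (\<forall>(c :: nat list \<Rightarrow> 'k) d. ncq_elem c \<and> ncq_elem d \<longrightarrow>
            (\<exists>e. ncq_elem e \<and> ncq_ser e = ser_mult (ncq_ser c) (ncq_ser d)
                 \<and> phi e = pqd_mult (phi c) (phi d)))
       \<and> phi (ncq_unit :: nat list \<Rightarrow> 'k) = pqd_unit
       \<and> (\<forall>c :: nat list \<Rightarrow> 'k. ncq_elem c \<longrightarrow> phi2 (ncq_coprod c) = pqd_coprod (phi c))
       \<and> (\<forall>c :: nat list \<Rightarrow> 'k. ncq_elem c \<longrightarrow> pqd_counit (phi c) = ncq_counit c)"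
proof -
  have product: "\<exists>e. ncq_elem e \<and> ncq_ser e = ser_mult (ncq_ser c) (ncq_ser d)
                    \<and> phi e = pqd_mult (phi c) (phi d)"
    if "ncq_elem c" and "ncq_elem d" for c d :: "nat list \<Rightarrow> 'k"
    using that ncq_elem_ncq_mult ncq_ser_ncq_mult phi_ncq_mult by blast
  show ?thesis
    using phi_linear pqd_elem_phi inj_on_phi product phi_ncq_unit phi2_ncq_coprod pqd_counit_phi
    by blast
qed

end
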